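(* Let $S\subset\mathbb{R}^n$ be a nonempty nearly convex set, let $\varphi\colon\mathbb{R}^n\to\overline{\mathbb{R}}$ be a nearly convex function bounded from below on $S$, and assume $$\mathrm{ri}(\mathrm{dom}\, \varphi)\cap\mathrm{ri}\, S\neq \emptyset.$$ Let $\varepsilon>0$. Then $\bar x\in S$ is an $\varepsilon$-solution of the problem $\inf\{\varphi(x)\mid x\in S\}$ if and only if there exist $\varepsilon_1, \varepsilon_2\geq 0$ with $\varepsilon_1+\varepsilon_2=\varepsilon$ such that $$0\in \partial_{\varepsilon_1}\varphi(\bar x)+ N_{\varepsilon_2}(\bar x; S).$$
   Context: A set $D$ is nearly convex if there is a convex $E$ with $E\subset D\subset\overline{E}$; a function is nearly convex if its epigraph $\{(x,\alpha)\mid\alpha\ge\varphi(x)\}$ is nearly convex; $\mathrm{dom}\,\varphi=\{x\mid\varphi(x)<\infty\}$. $\mathrm{ri}\,D=\{a\in D\mid\exists\delta>0,\ B(a;\delta)\cap\mathrm{aff}\,D\subset D\}$. A point $\bar x\in S$ is an $\varepsilon$-solution of $\inf\{\varphi(x)\mid x\in S\}$ if $\varphi(\bar x)\le\varphi(x)+\varepsilon$ for all $x\in S$. $\partial_\varepsilon\varphi(\bar x)=\{\xi\mid\langle\xi,x-\bar x\rangle-\varepsilon\le\varphi(x)-\varphi(\bar x)\ \forall x\in\mathbb{R}^n\}$ and $N_\varepsilon(\bar x;S)=\{\xi\mid\langle\xi,x-\bar x\rangle\le\varepsilon\ \forall x\in S\}$. *)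

theory Defs
  imports "HOL-Analysis.Analysis" "HOL-Library.Extended_Real"
begin

definition nearly_convex_set :: "'a::real_normed_vector set \<Rightarrow> bool" where
  "nearly_convex_set D \<longleftrightarrow> (\<exists>E. convex E \<and> E \<subseteq> D \<and> D \<subseteq> closure E)"

definition epigraph :: "('a \<Rightarrow> ereal) \<Rightarrow> ('a \<times> real) set" where
  "epigraph \<phi> = {(x, \<alpha>). ereal \<alpha> \<ge> \<phi> x}"

definition nearly_convex_fun :: "('a::real_normed_vector \<Rightarrow> ereal) \<Rightarrow> bool" where
  "nearly_convex_fun \<phi> \<longleftrightarrow> nearly_convex_set (epigraph \<phi>)"

definition edom :: "('a \<Rightarrow> ereal) \<Rightarrow> 'a set" where
  "edom \<phi> = {x. \<phi> x < \<infinity>}"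

definition eps_solution :: "('a \<Rightarrow> ereal) \<Rightarrow> 'a set \<Rightarrow> real \<Rightarrow> 'a \<Rightarrow> bool" where
  "eps_solution \<phi> S \<epsilon> xb \<longleftrightarrow> xb \<in> S \<and> (\<forall>x\<in>S. \<phi> xb \<le> \<phi> x + ereal \<epsilon>)"

definition eps_subdiff :: "real \<Rightarrow> ('a::real_inner \<Rightarrow> ereal) \<Rightarrow> 'a \<Rightarrow> 'a set" where
  "eps_subdiff \<epsilon> \<phi> xb =
     (if \<bar>\<phi> xb\<bar> \<noteq> \<infinity> then {\<xi>. \<forall>x. ereal (inner \<xi> (x - xb) - \<epsilon>) \<le> \<phi> x - \<phi> xb} else {})"

definition eps_normal :: "real \<Rightarrow> 'a::real_inner \<Rightarrow> 'a set \<Rightarrow> 'a set" where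
  "eps_normal \<epsilon> xb S = {\<xi>. \<forall>x\<in>S. inner \<xi> (x - xb) \<le> \<epsilon>}"

end

theory Submission imports Defs begin

text \<open>If \<open>xb\<close> is an \<open>\<epsilon>\<close>-solution, then \<open>\<phi> \<ge> \<eta> := \<phi> xb - \<epsilon>\<close> on \<open>S\<close>. Take convex \<open>E\<close>, \<open>F\<close>
  with \<open>E \<subseteq> epi \<phi> \<subseteq> cl E\<close> and \<open>F \<subseteq> S \<subseteq> cl F\<close>. The relatively open convex sets \<open>ri E\<close> and
  \<open>ri F \<times> (-\<infinity>, \<eta>)\<close> are disjoint, so a hyperplane separates them strictly. It is not vertical:
  a common point \<open>z\<close> of \<open>ri (dom \<phi>)\<close> and \<open>ri S\<close> gives points \<open>(z, t) \<in> ri E\<close> and \<open>(z, s)\<close> with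
  \<open>s \<rightarrow> -\<infinity>\<close> on the other side. Normalising its normal to \<open>(-\<xi>, 1)\<close> yields
  \<open>\<phi> x \<ge> \<eta> + \<langle>\<xi>, x - y\<rangle>\<close> for all \<open>x\<close> and all \<open>y \<in> S\<close>, and splitting \<open>\<epsilon>\<close> at
  \<open>inf\<^sub>y\<^sub>\<in>\<^sub>S \<langle>\<xi>, y\<rangle>\<close> gives \<open>\<xi> \<in> \<partial>\<^sub>\<epsilon>\<^sub>1\<phi>(xb)\<close> and \<open>-\<xi> \<in> N\<^sub>\<epsilon>\<^sub>2(xb; S)\<close>. The converse
  just adds the two defining inequalities.\<close>

lemma rel_interior_nearly_convex:
  fixes E D :: "'n::euclidean_space set"
  assumes "convex E" "E \<subseteq> D" "D \<subseteq> closure E"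
  shows "rel_interior D = rel_interior E"
proof -
  have aff: "affine hull D = affine hull E"
    using hull_mono[OF assms(2), of affine] hull_mono[OF assms(3), of affine] by simp
  have "rel_interior E \<subseteq> rel_interior D"
    using rel_interior_mono[OF assms(2)] aff by simp
  moreover have "rel_interior D \<subseteq> rel_interior (closure E)"
    using rel_interior_mono[OF assms(3)] aff by simp
  ultimately show ?thesis using convex_rel_interior_closure[OF assms(1)] by auto
qed

lemma edom_eq_fst_epigraph: "edom \<phi> = fst ` epigraph \<phi>"
proof (intro set_eqI iffI)
  fix x assume "x \<in> edom \<phi>"
  then obtain t where "\<phi> x \<le> ereal t"
    by (cases "\<phi> x") (auto simp: edom_def)
  then show "x \<in> fst ` epigraph \<phi>"
    by (force simp: epigraph_def)
qed (auto simp: edom_def epigraph_def)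

lemma rel_interior_edom_nearly_convex:
  fixes \<phi> :: "'n::euclidean_space \<Rightarrow> ereal"
  assumes "convex E" "E \<subseteq> epigraph \<phi>" "epigraph \<phi> \<subseteq> closure E"
  shows "rel_interior (edom \<phi>) = fst ` rel_interior E"
proof -
  have "rel_interior (edom \<phi>) = rel_interior (fst ` E)"
  proof (rule rel_interior_nearly_convex)
    show "convex (fst ` E)" using assms(1) by (intro convex_linear_image linear_fst)
    show "fst ` E \<subseteq> edom \<phi>"
      unfolding edom_eq_fst_epigraph using assms(2) by (rule image_mono)
    have "edom \<phi> \<subseteq> fst ` closure E"
      unfolding edom_eq_fst_epigraph using assms(3) by (rule image_mono)
    then show "edom \<phi> \<subseteq> closure (fst ` E)"
      using closure_linear_image_subset[OF linear_fst] by (rule order_trans)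
  qed
  then show ?thesis using rel_interior_convex_linear_image[OF linear_fst assms(1)] by simp
qed

lemma separating_hyperplane_rel_open:
  fixes C D :: "'n::euclidean_space set"
  assumes "convex C" "convex D" "rel_interior C = C" "rel_interior D = D" "C \<inter> D = {}"
  shows "\<exists>a. \<forall>p\<in>C. \<forall>q\<in>D. a \<bullet> q < a \<bullet> p"
proof -
  define f where "f = (\<lambda>w::'n \<times> 'n. fst w - snd w)"
  have "linear f" unfolding f_def by (intro linear_compose_sub linear_fst linear_snd)
  define K where "K = f ` (C \<times> D)"
  have "convex K" unfolding K_def by (intro convex_linear_image \<open>linear f\<close> convex_Times assms)
  have "rel_interior K = f ` rel_interior (C \<times> D)"
    unfolding K_def using rel_interior_convex_linear_image[OF \<open>linear f\<close> convex_Times[OF assms(1,2)]]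
    by simp
  also have "\<dots> = K" unfolding K_def using rel_interior_Times[OF assms(1,2)] assms(3,4) by simp
  finally have ri_K: "rel_interior K = K" .
  have "0 \<notin> K" using assms(5) unfolding K_def f_def by auto
  have "\<exists>a. \<forall>k\<in>K. 0 < a \<bullet> k"
  proof (cases "0 \<in> closure K")
    case True
    moreover have "0 \<notin> rel_interior K" using \<open>0 \<notin> K\<close> ri_K by simp
    ultimately obtain a where "\<And>k. k \<in> rel_interior K \<Longrightarrow> a \<bullet> 0 < a \<bullet> k"
      using supporting_hyperplane_relative_frontier[OF \<open>convex K\<close>] by metis
    then show ?thesis using ri_K by auto
  next
    case False
    then obtain a b where "a \<bullet> 0 < b" "\<forall>k\<in>closure K. b < a \<bullet> k"
      using separating_hyperplane_closed_point[of "closure K" 0] \<open>convex K\<close> convex_closure by blast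
    then have "\<forall>k\<in>K. 0 < a \<bullet> k" using closure_subset[of K] by fastforce
    then show ?thesis ..
  qed
  then show ?thesis unfolding K_def f_def by (auto simp: inner_diff_right)
qed

lemma separating_hyperplane_closure_le:
  fixes a :: "'n::real_inner"
  assumes "\<forall>p\<in>C. \<forall>q\<in>D. a \<bullet> q < a \<bullet> p" "p \<in> closure C" "q \<in> closure D"
  shows "a \<bullet> q \<le> a \<bullet> p"
proof -
  define H where "H = {w :: 'n \<times> 'n. a \<bullet> snd w \<le> a \<bullet> fst w}"
  have "closed H" unfolding H_def by (intro closed_Collect_le continuous_intros)
  moreover have "C \<times> D \<subseteq> H" using assms(1) unfolding H_def by fastforce
  ultimately have "closure C \<times> closure D \<subseteq> H" by (metis closure_Times closure_minimal)
  then show ?thesis using assms(2,3) unfolding H_def by auto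
qed

lemma pos_if_mult_less_below:
  fixes \<mu> t \<eta> :: real
  assumes "\<And>s. s < \<eta> \<Longrightarrow> \<mu> * s < \<mu> * t"
  shows "0 < \<mu>"
proof (rule ccontr)
  assume "\<not> 0 < \<mu>"
  then have "\<mu> * t \<le> \<mu> * min (\<eta> - 1) t" by (simp add: mult_left_mono_neg)
  moreover have "\<mu> * min (\<eta> - 1) t < \<mu> * t" by (rule assms) simp
  ultimately show False by linarith
qed

lemma rel_interior_epigraph_disjoint_below:
  assumes "E \<subseteq> epigraph \<phi>" "F \<subseteq> S" "\<forall>y\<in>S. ereal \<eta> \<le> \<phi> y"
  shows "rel_interior E \<inter> (rel_interior F \<times> {..<\<eta>}) = {}"
proof (intro equals0I)
  fix p assume p: "p \<in> rel_interior E \<inter> (rel_interior F \<times> {..<\<eta>})"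
  obtain x t where p_eq: "p = (x, t)" by (cases p)
  have "(x, t) \<in> epigraph \<phi>" using p p_eq assms(1) rel_interior_subset[of E] by blast
  then have "\<phi> x \<le> ereal t" by (simp add: epigraph_def)
  have "x \<in> S" "t < \<eta>" using p p_eq assms(2) rel_interior_subset[of F] by auto
  with assms(3) \<open>\<phi> x \<le> ereal t\<close> show False
    by (metis ereal_less_eq(3) not_le order_trans)
qed

lemma nearly_convex_affine_minorant:
  fixes \<phi> :: "'n::euclidean_space \<Rightarrow> ereal"
  assumes "nearly_convex_fun \<phi>" "nearly_convex_set S"
    and "z \<in> rel_interior (edom \<phi>)" "z \<in> rel_interior S"
    and lower: "\<forall>y\<in>S. ereal \<eta> \<le> \<phi> y"
  shows "\<exists>\<xi>. \<forall>x. \<forall>y\<in>S. ereal (\<eta> + \<xi> \<bullet> (x - y)) \<le> \<phi> x"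
proof -
  obtain E where cE: "convex E" and E: "E \<subseteq> epigraph \<phi>" "epigraph \<phi> \<subseteq> closure E"
    using assms(1) unfolding nearly_convex_fun_def nearly_convex_set_def by blast
  obtain F where cF: "convex F" and F: "F \<subseteq> S" "S \<subseteq> closure F"
    using assms(2) unfolding nearly_convex_set_def by blast
  define C where "C = rel_interior E"
  define D where "D = rel_interior F \<times> {..<\<eta>}"
  have "D = rel_interior (F \<times> {..<\<eta>})"
    unfolding D_def using rel_interior_Times[OF cF, of "{..<\<eta>}"] by (simp add: rel_interior_open)
  then have "convex D" "rel_interior D = D"
    using cF by (simp_all add: convex_rel_interior convex_Times rel_interior_rel_interior)
  moreover have "convex C" "rel_interior C = C"
    unfolding C_def using cE by (simp_all add: convex_rel_interior rel_interior_rel_interior)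
  moreover have "C \<inter> D = {}"
    unfolding C_def D_def using E(1) F(1) lower by (rule rel_interior_epigraph_disjoint_below)
  ultimately obtain a where "\<forall>p\<in>C. \<forall>q\<in>D. a \<bullet> q < a \<bullet> p"
    using separating_hyperplane_rel_open by blast
  moreover obtain \<xi>0 \<mu> where "a = (\<xi>0, \<mu>)" by (cases a)
  ultimately have sep: "\<forall>p\<in>C. \<forall>q\<in>D. (\<xi>0, \<mu>) \<bullet> q < (\<xi>0, \<mu>) \<bullet> p" by simp
  obtain t where zt: "(z, t) \<in> C"
    using assms(3) rel_interior_edom_nearly_convex[OF cE E] unfolding C_def by force
  have "z \<in> rel_interior F" using assms(4) rel_interior_nearly_convex[OF cF F] by simp
  have "\<mu> * s < \<mu> * t" if "s < \<eta>" for s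
  proof -
    have "(z, s) \<in> D" unfolding D_def using \<open>z \<in> rel_interior F\<close> that by simp
    then have "(\<xi>0, \<mu>) \<bullet> (z, s) < (\<xi>0, \<mu>) \<bullet> (z, t)" using sep zt by blast
    then show ?thesis by simp
  qed
  then have "0 < \<mu>" by (rule pos_if_mult_less_below)
  have closure_D: "closure D = closure F \<times> {..\<eta>}"
    unfolding D_def closure_Times using convex_closure_rel_interior[OF cF] by simp
  define \<xi> where "\<xi> = - (1 / \<mu>) *\<^sub>R \<xi>0"
  have affine_le: "\<eta> + \<xi> \<bullet> (x - y) \<le> t" if "\<phi> x \<le> ereal t" "y \<in> S" for x y t
  proof -
    have "(x, t) \<in> closure C"
      using that(1) E(2) convex_closure_rel_interior[OF cE] unfolding C_def epigraph_def by auto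
    moreover have "(y, \<eta>) \<in> closure D" using that(2) F(2) closure_D by auto
    ultimately have "(\<xi>0, \<mu>) \<bullet> (y, \<eta>) \<le> (\<xi>0, \<mu>) \<bullet> (x, t)"
      by (rule separating_hyperplane_closure_le[OF sep])
    with \<open>0 < \<mu>\<close> show ?thesis unfolding \<xi>_def by (simp add: inner_diff_right field_simps)
  qed
  have "ereal (\<eta> + \<xi> \<bullet> (x - y)) \<le> \<phi> x" if "y \<in> S" for x y
  proof (rule ereal_le_real)
    fix t assume "\<phi> x \<le> ereal t"
    then show "ereal (\<eta> + \<xi> \<bullet> (x - y)) \<le> ereal t" using affine_le that by simp
  qed
  then show ?thesis by blast
qed

lemma eps_solution_lower_bound:
  assumes "eps_solution \<phi> S \<epsilon> xb" "\<phi> xb = ereal r"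
  shows "\<forall>y\<in>S. ereal (r - \<epsilon>) \<le> \<phi> y"
proof
  fix y assume "y \<in> S"
  then show "ereal (r - \<epsilon>) \<le> \<phi> y" using assms by (cases "\<phi> y") (auto simp: eps_solution_def)
qed

lemma eps_subdiff_eps_normal_of_minorant:
  fixes xb :: "'n::real_inner" and S \<phi> \<xi>
  assumes "xb \<in> S" "\<phi> xb = ereal r"
    and minorant: "\<forall>x. \<forall>y\<in>S. ereal (r - \<epsilon> + \<xi> \<bullet> (x - y)) \<le> \<phi> x"
  shows "\<exists>\<epsilon>1 \<epsilon>2. \<epsilon>1 \<ge> 0 \<and> \<epsilon>2 \<ge> 0 \<and> \<epsilon>1 + \<epsilon>2 = \<epsilon> \<and>
    \<xi> \<in> eps_subdiff \<epsilon>1 \<phi> xb \<and> - \<xi> \<in> eps_normal \<epsilon>2 xb S"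
proof -
  define \<beta> where "\<beta> = Inf ((\<bullet>) \<xi> ` S)"
  have lower: "\<xi> \<bullet> xb - \<epsilon> \<le> \<xi> \<bullet> y" if "y \<in> S" for y
    using minorant[rule_format, OF that, of xb] assms(2) by (simp add: inner_diff_right)
  then have "bdd_below ((\<bullet>) \<xi> ` S)" by (intro bdd_belowI2)
  then have \<beta>_le: "\<beta> \<le> \<xi> \<bullet> y" if "y \<in> S" for y
    unfolding \<beta>_def using that by (intro cInf_lower) auto
  have \<beta>_ge: "c \<le> \<beta>" if "\<And>y. y \<in> S \<Longrightarrow> c \<le> \<xi> \<bullet> y" for c
    unfolding \<beta>_def using assms(1) that by (intro cInf_greatest) auto
  define \<epsilon>2 where "\<epsilon>2 = \<xi> \<bullet> xb - \<beta>"
  have "\<epsilon> - \<epsilon>2 \<ge> 0" "\<epsilon>2 \<ge> 0"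
    using \<beta>_le[OF assms(1)] \<beta>_ge[OF lower] unfolding \<epsilon>2_def by auto
  moreover have "- \<xi> \<in> eps_normal \<epsilon>2 xb S"
    unfolding eps_normal_def \<epsilon>2_def using \<beta>_le by (auto simp: inner_diff_right)
  moreover have "\<xi> \<in> eps_subdiff (\<epsilon> - \<epsilon>2) \<phi> xb"
  proof -
    have "ereal (\<xi> \<bullet> (x - xb) - (\<epsilon> - \<epsilon>2)) \<le> \<phi> x - ereal r" for x
    proof (cases "\<phi> x")
      case (real s)
      have "r - \<epsilon> + \<xi> \<bullet> x - s \<le> \<beta>"
      proof (rule \<beta>_ge)
        fix y assume "y \<in> S"
        show "r - \<epsilon> + \<xi> \<bullet> x - s \<le> \<xi> \<bullet> y"
          using minorant[rule_format, OF \<open>y \<in> S\<close>, of x] real by (simp add: inner_diff_right)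
      qed
      with real show ?thesis unfolding \<epsilon>2_def by (simp add: inner_diff_right)
    next
      case MInf
      then show ?thesis using minorant[rule_format, OF assms(1), of x] by simp
    qed simp
    then show ?thesis by (simp add: eps_subdiff_def assms(2))
  qed
  ultimately show ?thesis by (intro exI[of _ "\<epsilon> - \<epsilon>2"] exI[of _ \<epsilon>2]) simp
qed

lemma eps_solution_if_eps_subdiff_eps_normal:
  assumes "xb \<in> S" "\<epsilon>1 + \<epsilon>2 = \<epsilon>"
    and "\<xi> \<in> eps_subdiff \<epsilon>1 \<phi> xb" "- \<xi> \<in> eps_normal \<epsilon>2 xb S"
  shows "eps_solution \<phi> S \<epsilon> xb"
proof -
  obtain r where r: "\<phi> xb = ereal r"
    using assms(3) by (cases "\<phi> xb") (auto simp: eps_subdiff_def)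
  have "\<phi> xb \<le> \<phi> x + ereal \<epsilon>" if "x \<in> S" for x
  proof -
    have "ereal (\<xi> \<bullet> (x - xb) - \<epsilon>1) \<le> \<phi> x - ereal r"
      using assms(3) r by (simp add: eps_subdiff_def)
    moreover have "- (\<xi> \<bullet> (x - xb)) \<le> \<epsilon>2" using assms(4) that by (simp add: eps_normal_def)
    ultimately show ?thesis using r assms(2) by (cases "\<phi> x") auto
  qed
  then show ?thesis using assms(1) by (simp add: eps_solution_def)
qed

theorem mainTheorem8:
  fixes S :: "'a::euclidean_space set" and \<phi> :: "'a \<Rightarrow> ereal" and \<epsilon> :: real and xb :: 'a
  assumes "S \<noteq> {}" and "nearly_convex_set S"
    and "nearly_convex_fun \<phi>"
    and "\<exists>m::real. \<forall>x\<in>S. ereal m \<le> \<phi> x"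
    and "rel_interior (edom \<phi>) \<inter> rel_interior S \<noteq> {}"
    and "\<epsilon> > 0" and "xb \<in> S"
  shows "eps_solution \<phi> S \<epsilon> xb \<longleftrightarrow>
    (\<exists>\<epsilon>1 \<epsilon>2. \<epsilon>1 \<ge> 0 \<and> \<epsilon>2 \<ge> 0 \<and> \<epsilon>1 + \<epsilon>2 = \<epsilon> \<and>
       0 \<in> {a + b | a b. a \<in> eps_subdiff \<epsilon>1 \<phi> xb \<and> b \<in> eps_normal \<epsilon>2 xb S})"
proof
  assume sol: "eps_solution \<phi> S \<epsilon> xb"
  obtain z where z: "z \<in> rel_interior (edom \<phi>)" "z \<in> rel_interior S" using assms(5) by blast
  have "\<phi> z < \<infinity>" "z \<in> S" using z rel_interior_subset by (auto simp: edom_def)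
  moreover have "\<phi> xb \<le> \<phi> z + ereal \<epsilon>" using sol \<open>z \<in> S\<close> by (simp add: eps_solution_def)
  moreover obtain m where "ereal m \<le> \<phi> xb" using assms(4,7) by blast
  ultimately obtain r where r: "\<phi> xb = ereal r" by (cases "\<phi> xb"; cases "\<phi> z") auto
  obtain \<xi> where "\<forall>x. \<forall>y\<in>S. ereal (r - \<epsilon> + \<xi> \<bullet> (x - y)) \<le> \<phi> x"
    using nearly_convex_affine_minorant[OF assms(3,2) z eps_solution_lower_bound[OF sol r]] by blast
  then obtain \<epsilon>1 \<epsilon>2 where "\<epsilon>1 \<ge> 0" "\<epsilon>2 \<ge> 0" "\<epsilon>1 + \<epsilon>2 = \<epsilon>"
      "\<xi> \<in> eps_subdiff \<epsilon>1 \<phi> xb" "- \<xi> \<in> eps_normal \<epsilon>2 xb S"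
    using eps_subdiff_eps_normal_of_minorant[of xb S \<phi>, OF assms(7) r] by blast
  then show "\<exists>\<epsilon>1 \<epsilon>2. \<epsilon>1 \<ge> 0 \<and> \<epsilon>2 \<ge> 0 \<and> \<epsilon>1 + \<epsilon>2 = \<epsilon> \<and>
       0 \<in> {a + b | a b. a \<in> eps_subdiff \<epsilon>1 \<phi> xb \<and> b \<in> eps_normal \<epsilon>2 xb S}"
    by (intro exI[of _ \<epsilon>1] exI[of _ \<epsilon>2]) force
next
  assume "\<exists>\<epsilon>1 \<epsilon>2. \<epsilon>1 \<ge> 0 \<and> \<epsilon>2 \<ge> 0 \<and> \<epsilon>1 + \<epsilon>2 = \<epsilon> \<and>
       0 \<in> {a + b | a b. a \<in> eps_subdiff \<epsilon>1 \<phi> xb \<and> b \<in> eps_normal \<epsilon>2 xb S}"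
  then obtain \<epsilon>1 \<epsilon>2 \<xi> \<zeta> where "\<epsilon>1 + \<epsilon>2 = \<epsilon>" "0 = \<xi> + \<zeta>"
      "\<xi> \<in> eps_subdiff \<epsilon>1 \<phi> xb" "\<zeta> \<in> eps_normal \<epsilon>2 xb S"
    by blast
  moreover from \<open>0 = \<xi> + \<zeta>\<close> have "\<zeta> = - \<xi>" by (simp add: eq_neg_iff_add_eq_0 add.commute)
  ultimately show "eps_solution \<phi> S \<epsilon> xb"
    using eps_solution_if_eps_subdiff_eps_normal[OF assms(7)] by simp
qed

end
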